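(* Assume the market model described in the context, in particular the standing assumption $M'(t,y)>-\tfrac12\,\mathrm{sgn}(y)\,P'(t,y)$ for all $t,y$. Let $Z^1$ be a trading strategy that is either càdlàg or càglàd (as in the context). Then the cost process $T^{Z^1}_t$ (given by the càdlàg formula if $Z^1$ is càdlàg and by the càglàd formula if $Z^1$ is càglàd) is non-negative and increasing on $[0,T]$.
   Context: Fix $T>0$ and a filtered probability space $(\Omega,\mathcal F,(\mathcal F_t)_{t\in[0,T]},\mathbb P)$ satisfying the usual conditions, with $\mathcal F_0$ trivial. There is a riskless asset with constant price $1$ and a risky asset bought at the ask price $A(t,y)$ and sold at the bid price $B(t,y)$, where $y>0$ is a buy order and $y<0$ a sell order of size $y$. Assumptions: $A(t,y),B(t,y)$ are adapted and non-negative; $A(\cdot,0),B(\cdot,0)$ are non-negative locally bounded semimartingales; $A,B$ are $C^2$ in $y$ and their first and second $y$-derivatives are càdlàg and locally bounded in $t$. Set $M(t,y)=\tfrac12(A(t,y)+B(t,y))$ (mid-price) and $P(t,y)=A(t,y)-B(t,y)$ (bid-ask spread); a prime denotes $\partial/\partial y$. Standing assumption: $M'(t,y)>-\tfrac12\mathrm{sgn}(y)P'(t,y)$ for all $t,y$. A trading strategy is $Z=(Z^0,Z^1)$ with $Z^1$ the number of risky shares held; $Z^1$ is either a càdlàg predictable process, a continuous adapted process, or a càglàd adapted process, with finite pathwise quadratic variation $[Z^1,Z^1]_T=\lim_n\sum_{i\ge1}|Z^1_{\tau^n_i}-Z^1_{\tau^n_{i-1}}|^2$ (existing and finite a.s.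 for every sequence of random partitions of $[0,T]$ by stopping times tending to the identity). $\Delta Z^1_t$ denotes the trade at time $t$, $y(t)=\mathrm{sgn}(\Delta Z^1_t)$. Cost process for càdlàg $Z^1$: $T^{Z^1}_t=\int_0^t M'(s,0)\,d[Z^1,Z^1]_s+\sum_{0<s\le t}(Z^1_s-Z^1_{s-})^2(M'(s,0)-M'(s-,0))+\tfrac12\sum_{0<s\le t}[M'(s,Z^1_s-Z^1_{s-})-M'(s,0)](Z^1_s-Z^1_{s-})^2+\tfrac12\int_0^tP'(s,0)y(s)\,d[Z^1,Z^1]_s+\tfrac12\sum_{0<s\le t}|Z^1_s-Z^1_{s-}|(Z^1_s-Z^1_{s-})(P'(s,0)-P'(s-,0))+\tfrac14\sum_{0<s\le t}|Z^1_s-Z^1_{s-}|(Z^1_s-Z^1_{s-})(P'(s,Z^1_s-Z^1_{s-})-P'(s,0))$. Cost process for càglàd $Z^1$: $T^{Z^1}_t=\int_0^tM'(s,0)\,d[Z^1,Z^1]_s+\sum_{0\le s<t}\tfrac12[M'(s,Z^1_{s+}-Z^1_s)-M'(s,0)](Z^1_{s+}-Z^1_s)^2+\tfrac12\int_0^tP'(s,0)y(s)\,d[Z^1,Z^1]_s+\tfrac14\sum_{0\le s<t}|Z^1_{s+}-Z^1_s|(Z^1_{s+}-Z^1_s)(P'(s,Z^1_{s+}-Z^1_s)-P'(s,0))$. *)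

theory Defs
  imports "HOL-Analysis.Analysis"
begin

text \<open>Pathwise rendering of the market model. Time is restricted to [0,T].\<close>

definition lft :: "(real \<Rightarrow> real) \<Rightarrow> real \<Rightarrow> real" where
  "lft f s = Lim (at_left s) f"

definition rgt :: "(real \<Rightarrow> real) \<Rightarrow> real \<Rightarrow> real" where
  "rgt f s = Lim (at_right s) f"

definition cadlag_on :: "real \<Rightarrow> (real \<Rightarrow> real) \<Rightarrow> bool" where
  "cadlag_on T f \<longleftrightarrow> (\<forall>s\<in>{0..<T}. continuous (at_right s) f) \<and>
                      (\<forall>s\<in>{0<..T}. \<exists>l. (f \<longlongrightarrow> l) (at_left s))"

definition caglad_on :: "real \<Rightarrow> (real \<Rightarrow> real) \<Rightarrow> bool" where
  "caglad_on T f \<longleftrightarrow> (\<forall>s\<in>{0<..T}. continuous (at_left s) f) \<and>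
                      (\<forall>s\<in>{0..<T}. \<exists>l. (f \<longlongrightarrow> l) (at_right s))"

definition C2_fun :: "(real \<Rightarrow> real) \<Rightarrow> bool" where
  "C2_fun f \<longleftrightarrow> (\<forall>y. f differentiable (at y)) \<and> (\<forall>y. deriv f differentiable (at y))
                 \<and> continuous_on UNIV (deriv (deriv f))"

text \<open>Mid-price derivative M' and spread derivative P' (derivative in the order size y).\<close>
definition Mp :: "(real \<Rightarrow> real \<Rightarrow> real) \<Rightarrow> (real \<Rightarrow> real \<Rightarrow> real) \<Rightarrow> real \<Rightarrow> real \<Rightarrow> real" where
  "Mp A B t y = deriv (\<lambda>z. (A t z + B t z) / 2) y"

definition Pp :: "(real \<Rightarrow> real \<Rightarrow> real) \<Rightarrow> (real \<Rightarrow> real \<Rightarrow> real) \<Rightarrow> real \<Rightarrow> real \<Rightarrow> real" where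
  "Pp A B t y = deriv (\<lambda>z. A t z - B t z) y"

definition price_ok :: "real \<Rightarrow> (real \<Rightarrow> real \<Rightarrow> real) \<Rightarrow> bool" where
  "price_ok T A \<longleftrightarrow>
     (\<forall>t\<in>{0..T}. \<forall>y. 0 \<le> A t y) \<and>
     cadlag_on T (\<lambda>t. A t 0) \<and>
     (\<forall>t\<in>{0..T}. C2_fun (A t)) \<and>
     (\<forall>y. cadlag_on T (\<lambda>t. deriv (A t) y)) \<and>
     (\<forall>y. cadlag_on T (\<lambda>t. deriv (deriv (A t)) y)) \<and>
     (\<forall>R. \<exists>K. \<forall>t\<in>{0..T}. \<forall>y. \<bar>y\<bar> \<le> R \<longrightarrow>
          \<bar>deriv (A t) y\<bar> \<le> K \<and> \<bar>deriv (deriv (A t)) y\<bar> \<le> K)"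

text \<open>Path q of the quadratic variation [Z,Z]: nondecreasing, starts at 0, and its jumps
  are the squared jumps (trades) of Z; right-continuous for cadlag Z, left-continuous
  for caglad Z.\<close>
definition qv_cadlag :: "real \<Rightarrow> (real \<Rightarrow> real) \<Rightarrow> (real \<Rightarrow> real) \<Rightarrow> bool" where
  "qv_cadlag T Z q \<longleftrightarrow> mono_on {0..T} q \<and> q 0 = 0 \<and>
     (\<forall>s\<in>{0..<T}. continuous (at_right s) q) \<and>
     (\<forall>s\<in>{0<..T}. (q \<longlongrightarrow> q s - (Z s - lft Z s)\<^sup>2) (at_left s))"

definition qv_caglad :: "real \<Rightarrow> (real \<Rightarrow> real) \<Rightarrow> (real \<Rightarrow> real) \<Rightarrow> bool" where
  "qv_caglad T Z q \<longleftrightarrow> mono_on {0..T} q \<and> q 0 = 0 \<and>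
     (\<forall>s\<in>{0<..T}. continuous (at_left s) q) \<and>
     (\<forall>s\<in>{0..<T}. (q \<longlongrightarrow> q s + (rgt Z s - Z s)\<^sup>2) (at_right s))"

text \<open>Lebesgue--Stieltjes measure d[Z,Z] on the real line: q is extended constantly outside
  [0,T] and regularised to the right; the measure of (a,b] is then q(b+) - q(a+), and the
  measure of [a,b) is q(b-)-q(a-).\<close>
definition qext :: "real \<Rightarrow> (real \<Rightarrow> real) \<Rightarrow> real \<Rightarrow> real" where
  "qext T q x = q (max 0 (min x T))"

definition LS :: "real \<Rightarrow> (real \<Rightarrow> real) \<Rightarrow> real measure" where
  "LS T q = interval_measure (\<lambda>x. rgt (qext T q) x)"

text \<open>Cost process for cadlag Z. The stochastic integrals against d[Z,Z] use the
  left-limit (predictable) version of the integrand, as usual for Ito integrals.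
  Here y(s) = sgn(Z s - Z s-).\<close>
definition cost_cadlag ::
  "real \<Rightarrow> (real \<Rightarrow> real \<Rightarrow> real) \<Rightarrow> (real \<Rightarrow> real \<Rightarrow> real) \<Rightarrow> (real \<Rightarrow> real) \<Rightarrow> (real \<Rightarrow> real)
     \<Rightarrow> real \<Rightarrow> real" where
  "cost_cadlag T A B Z q t =
     set_lebesgue_integral (LS T q) {0<..t} (\<lambda>s. lft (\<lambda>r. Mp A B r 0) s)
   + infsum (\<lambda>s. (Z s - lft Z s)\<^sup>2 * (Mp A B s 0 - lft (\<lambda>r. Mp A B r 0) s)) {0<..t}
   + infsum (\<lambda>s. 1/2 * (Mp A B s (Z s - lft Z s) - Mp A B s 0) * (Z s - lft Z s)\<^sup>2) {0<..t}
   + 1/2 * set_lebesgue_integral (LS T q) {0<..t}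
             (\<lambda>s. lft (\<lambda>r. Pp A B r 0) s * sgn (Z s - lft Z s))
   + infsum (\<lambda>s. 1/2 * \<bar>Z s - lft Z s\<bar> * (Z s - lft Z s)
                   * (Pp A B s 0 - lft (\<lambda>r. Pp A B r 0) s)) {0<..t}
   + infsum (\<lambda>s. 1/4 * \<bar>Z s - lft Z s\<bar> * (Z s - lft Z s)
                   * (Pp A B s (Z s - lft Z s) - Pp A B s 0)) {0<..t}"

text \<open>Cost process for caglad Z; the trade at time s is Z(s+) - Z(s), y(s) its sign.\<close>
definition cost_caglad ::
  "real \<Rightarrow> (real \<Rightarrow> real \<Rightarrow> real) \<Rightarrow> (real \<Rightarrow> real \<Rightarrow> real) \<Rightarrow> (real \<Rightarrow> real) \<Rightarrow> (real \<Rightarrow> real)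
     \<Rightarrow> real \<Rightarrow> real" where
  "cost_caglad T A B Z q t =
     set_lebesgue_integral (LS T q) {0..<t} (\<lambda>s. Mp A B s 0)
   + infsum (\<lambda>s. 1/2 * (Mp A B s (rgt Z s - Z s) - Mp A B s 0) * (rgt Z s - Z s)\<^sup>2) {0..<t}
   + 1/2 * set_lebesgue_integral (LS T q) {0..<t} (\<lambda>s. Pp A B s 0 * sgn (rgt Z s - Z s))
   + infsum (\<lambda>s. 1/4 * \<bar>rgt Z s - Z s\<bar> * (rgt Z s - Z s)
                   * (Pp A B s (rgt Z s - Z s) - Pp A B s 0)) {0..<t}"

definition nonneg_increasing :: "real \<Rightarrow> (real \<Rightarrow> real) \<Rightarrow> bool" where
  "nonneg_increasing T C \<longleftrightarrow> (\<forall>t\<in>{0..T}. 0 \<le> C t) \<and> mono_on {0..T} C"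

end

(*
  The measure d[Z,Z] is diffuse except for an atom of mass (Delta Z_s)^2 at every trade s.
  Off the atoms the cost process integrates M'(s,0) (or its left limit) against d[Z,Z]; the
  spread term vanishes there since sgn (Delta Z_s) = 0, and M'(s,0) > 0 is the standing
  assumption at y = 0. At an atom all terms of the cost combine to (Delta Z_s)^2 times
    1/2 (M'(s,0) + M'(s,Delta Z_s)) + 1/4 sgn (Delta Z_s) (P'(s,0) + P'(s,Delta Z_s)),
  the average of the standing assumption at y = Delta Z_s and of its limit as y -> 0 from
  the side of Delta Z_s, hence non-negative. So the cost up to time t is the integral of a
  non-negative function plus a sum of non-negative jump terms, both over sets growing with t.
*)

theory Submission
  imports Defs
begin

section \<open>One-sided limits and measurability\<close>

lemma lft_eq: "(f \<longlongrightarrow> l) (at_left (s::real)) \<Longrightarrow> lft f s = l"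
  unfolding lft_def by (rule tendsto_Lim) (auto simp: trivial_limit_at_left_real)

lemma rgt_eq: "(f \<longlongrightarrow> l) (at_right (s::real)) \<Longrightarrow> rgt f s = l"
  unfolding rgt_def by (rule tendsto_Lim) (auto simp: trivial_limit_at_right_real)

lemma lft_tendsto: "\<exists>l. (f \<longlongrightarrow> l) (at_left (s::real)) \<Longrightarrow> (f \<longlongrightarrow> lft f s) (at_left s)"
  using lft_eq by metis

lemma lft_between:
  assumes s: "s \<in> {0<..T}" and lim: "\<exists>l. (f \<longlongrightarrow> l) (at_left s)"
    and bnd: "\<And>t. t \<in> {0..T} \<Longrightarrow> a \<le> f t \<and> f t \<le> b"
  shows "a \<le> lft f s \<and> lft f s \<le> b"
proof -
  have "0 < s" using s by simp
  have ev: "\<forall>\<^sub>F t in at_left s. a \<le> f t \<and> f t \<le> b"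
    unfolding eventually_at_left[OF \<open>0 < s\<close>] using s bnd by (intro exI[of _ 0]) auto
  show ?thesis
    using tendsto_lowerbound[OF lft_tendsto[OF lim] eventually_mono[OF ev]]
      tendsto_upperbound[OF lft_tendsto[OF lim] eventually_mono[OF ev]] by auto
qed

lemma cadlag_on_lincomb:
  assumes f: "cadlag_on T f" and g: "cadlag_on T g"
    and h: "\<And>t. t \<in> {0..T} \<Longrightarrow> h t = a * f t + b * g t"
  shows "cadlag_on T h"
  unfolding cadlag_on_def
proof (intro conjI ballI)
  fix s assume s: "s \<in> {0..<T}"
  have "s < T" using s by simp
  have lim: "((\<lambda>t. a * f t + b * g t) \<longlongrightarrow> a * f s + b * g s) (at_right s)"
    using f g s unfolding cadlag_on_def by (intro tendsto_intros) (auto simp: continuous_within)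
  have ev: "\<forall>\<^sub>F t in at_right s. a * f t + b * g t = h t"
    unfolding eventually_at_right[OF \<open>s < T\<close>] using s by (intro exI[of _ T]) (auto simp: h)
  have "(h \<longlongrightarrow> h s) (at_right s)"
    using tendsto_cong[OF ev, THEN iffD1, OF lim] h[of s] s by simp
  then show "continuous (at_right s) h" by (simp add: continuous_within)
next
  fix s assume s: "s \<in> {0<..T}"
  have "0 < s" using s by simp
  obtain l1 l2 where "(f \<longlongrightarrow> l1) (at_left s)" "(g \<longlongrightarrow> l2) (at_left s)"
    using f g s unfolding cadlag_on_def by blast
  then have lim: "((\<lambda>t. a * f t + b * g t) \<longlongrightarrow> a * l1 + b * l2) (at_left s)"
    by (intro tendsto_intros)
  have ev: "\<forall>\<^sub>F t in at_left s. a * f t + b * g t = h t"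
    unfolding eventually_at_left[OF \<open>0 < s\<close>] using s by (intro exI[of _ 0]) (auto simp: h)
  show "\<exists>l. (h \<longlongrightarrow> l) (at_left s)"
    using tendsto_cong[OF ev, THEN iffD1, OF lim] by blast
qed

lemma grid_tendsto_at_left:
  fixes s :: real
  shows "filterlim (\<lambda>n. (real_of_int \<lceil>real (Suc n) * s\<rceil> - 1) / real (Suc n)) (at_left s) sequentially"
proof (rule tendsto_imp_filterlim_at_left)
  let ?x = "\<lambda>n. (real_of_int \<lceil>real (Suc n) * s\<rceil> - 1) / real (Suc n)"
  have below: "?x n < s" and above: "s - 1 / real (Suc n) \<le> ?x n" for n
  proof -
    have "real_of_int \<lceil>real (Suc n) * s\<rceil> - 1 < real (Suc n) * s" by linarith
    then show "?x n < s" by (simp add: divide_less_eq mult.commute)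
    have "real (Suc n) * s - 1 \<le> real_of_int \<lceil>real (Suc n) * s\<rceil> - 1" by linarith
    then show "s - 1 / real (Suc n) \<le> ?x n" by (simp add: le_divide_eq diff_divide_distrib mult.commute)
  qed
  have lim: "(\<lambda>n. s - 1 / real (Suc n)) \<longlonglongrightarrow> s"
    using tendsto_diff[OF tendsto_const LIMSEQ_Suc[OF lim_inverse_n'], of s] by simp
  show "?x \<longlonglongrightarrow> s"
    by (rule tendsto_sandwich[OF _ _ lim tendsto_const])
       (use below above in \<open>auto intro!: always_eventually less_imp_le\<close>)
  show "\<forall>\<^sub>F n in sequentially. ?x n < s" using below by simp
qed

lemma grid_tendsto_at_right:
  fixes s :: real
  shows "filterlim (\<lambda>n. (real_of_int \<lfloor>real (Suc n) * s\<rfloor> + 1) / real (Suc n)) (at_right s) sequentially"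
proof (rule tendsto_imp_filterlim_at_right)
  let ?x = "\<lambda>n. (real_of_int \<lfloor>real (Suc n) * s\<rfloor> + 1) / real (Suc n)"
  have above: "s < ?x n" and below: "?x n \<le> s + 1 / real (Suc n)" for n
  proof -
    have "real (Suc n) * s < real_of_int \<lfloor>real (Suc n) * s\<rfloor> + 1" by linarith
    then show "s < ?x n" by (simp add: less_divide_eq mult.commute)
    have "real_of_int \<lfloor>real (Suc n) * s\<rfloor> + 1 \<le> real (Suc n) * s + 1" by linarith
    then show "?x n \<le> s + 1 / real (Suc n)" by (simp add: divide_le_eq add_divide_distrib mult.commute)
  qed
  have lim: "(\<lambda>n. s + 1 / real (Suc n)) \<longlonglongrightarrow> s"
    using tendsto_add[OF tendsto_const LIMSEQ_Suc[OF lim_inverse_n'], of s] by simp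
  show "?x \<longlonglongrightarrow> s"
    by (rule tendsto_sandwich[OF _ _ tendsto_const lim])
       (use below above in \<open>auto intro!: always_eventually less_imp_le\<close>)
  show "\<forall>\<^sub>F n in sequentially. s < ?x n" using above by simp
qed

text \<open>The grid points below s depend on s only through an integer, so the approximants are
  measurable for arbitrary f.\<close>

lemma set_borel_measurable_lft:
  fixes f :: "real \<Rightarrow> real"
  assumes A: "A \<in> sets borel" and lim: "\<And>s. s \<in> A \<Longrightarrow> \<exists>l. (f \<longlongrightarrow> l) (at_left s)"
  shows "set_borel_measurable borel A (lft f)"
  unfolding set_borel_measurable_def
proof (rule borel_measurable_LIMSEQ_real)
  let ?x = "\<lambda>n s. (real_of_int \<lceil>real (Suc n) * s\<rceil> - 1) / real (Suc n)"
  show "(\<lambda>n. indicator A s * f (?x n s)) \<longlonglongrightarrow> indicator A s *\<^sub>R lft f s" for s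
  proof (cases "s \<in> A")
    case True
    then show ?thesis
      using filterlim_compose[OF lft_tendsto[OF lim] grid_tendsto_at_left] by simp
  qed simp
  have "(\<lambda>s. (\<lambda>k::int. \<lambda>s. indicator A s * f ((real_of_int k - 1) / real (Suc n))) \<lceil>real (Suc n) * s\<rceil> s)
        \<in> borel_measurable borel" for n
    by (rule measurable_compose_countable'[where I=UNIV])
       (use A in \<open>auto intro: measurable_compose[OF _ measurable_real_ceiling]\<close>)
  then show "(\<lambda>s. indicator A s * f (?x n s)) \<in> borel_measurable borel" for n
    by simp
qed

lemma set_borel_measurable_continuous_at_right:
  fixes f :: "real \<Rightarrow> real"
  assumes A: "A \<in> sets borel" and rc: "\<And>s. s \<in> A \<Longrightarrow> continuous (at_right s) f"
  shows "set_borel_measurable borel A f"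
  unfolding set_borel_measurable_def
proof (rule borel_measurable_LIMSEQ_real)
  let ?x = "\<lambda>n s. (real_of_int \<lfloor>real (Suc n) * s\<rfloor> + 1) / real (Suc n)"
  show "(\<lambda>n. indicator A s * f (?x n s)) \<longlonglongrightarrow> indicator A s *\<^sub>R f s" for s
  proof (cases "s \<in> A")
    case True
    then have "(f \<longlongrightarrow> f s) (at_right s)" using rc by (simp add: continuous_within)
    then show ?thesis
      using filterlim_compose[OF _ grid_tendsto_at_right] True by simp
  qed simp
  have "(\<lambda>s. (\<lambda>k::int. \<lambda>s. indicator A s * f ((real_of_int k + 1) / real (Suc n))) \<lfloor>real (Suc n) * s\<rfloor> s)
        \<in> borel_measurable borel" for n
    by (rule measurable_compose_countable'[where I=UNIV])
       (use A in \<open>auto intro: measurable_compose[OF _ measurable_real_floor]\<close>)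
  then show "(\<lambda>s. indicator A s * f (?x n s)) \<in> borel_measurable borel" for n
    by simp
qed

section \<open>Monotone functions and the measure d[Z,Z]\<close>

lemma mono_tendsto_rgt:
  fixes G :: "real \<Rightarrow> real"
  assumes "mono G"
  shows "(G \<longlongrightarrow> rgt G x) (at_right x)"
proof -
  have "(G \<longlongrightarrow> Inf (G ` ({x<..} \<inter> UNIV))) (at x within ({x<..} \<inter> UNIV))"
    by (rule Lim_right_bound[where K="G x"]) (auto intro: monoD[OF assms])
  then show ?thesis
    by (metis inf_top.right_neutral rgt_eq)
qed

lemma mono_rgt_bounds:
  fixes G :: "real \<Rightarrow> real"
  assumes G: "mono G" and "x < y"
  shows "G x \<le> rgt G x" "rgt G x \<le> G y"
proof -
  show "G x \<le> rgt G x"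
  proof (rule tendsto_lowerbound[OF mono_tendsto_rgt[OF G]])
    show "\<forall>\<^sub>F z in at_right x. G x \<le> G z"
      using eventually_at_right_less[of x] by (rule eventually_mono) (auto intro: monoD[OF G])
  qed simp
  show "rgt G x \<le> G y"
    by (rule tendsto_upperbound[OF mono_tendsto_rgt[OF G]])
       (use \<open>x < y\<close> in \<open>auto simp: eventually_at_right[OF \<open>x < y\<close>] intro!: exI[of _ y] monoD[OF G]\<close>)
qed

lemma mono_rgt:
  fixes G :: "real \<Rightarrow> real"
  assumes G: "mono G"
  shows "mono (rgt G)"
proof (rule monoI)
  fix x y :: real assume "x \<le> y"
  show "rgt G x \<le> rgt G y"
  proof (cases "x = y")
    case False
    then have "x < y" using \<open>x \<le> y\<close> by linarith
    then show ?thesis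
      using mono_rgt_bounds[OF G \<open>x < y\<close>] mono_rgt_bounds[OF G, of y "y + 1"] by linarith
  qed simp
qed

lemma continuous_at_right_rgt:
  fixes G :: "real \<Rightarrow> real"
  assumes G: "mono G"
  shows "continuous (at_right x) (rgt G)"
proof -
  have "filterlim (\<lambda>y. 2 * y - x) (at_right x) (at_right x)"
  proof (rule tendsto_imp_filterlim_at_right)
    show "((\<lambda>y. 2 * y - x) \<longlongrightarrow> x) (at_right x)"
      using tendsto_intros(1)[of "\<lambda>y. 2 * y - x"] by (auto intro!: tendsto_eq_intros)
  qed (auto intro: eventually_at_right_less[THEN eventually_mono])
  then have upper: "((\<lambda>y. G (2 * y - x)) \<longlongrightarrow> rgt G x) (at_right x)"
    by (rule filterlim_compose[OF mono_tendsto_rgt[OF G]])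
  have "\<forall>\<^sub>F y in at_right x. rgt G x \<le> rgt G y \<and> rgt G y \<le> G (2 * y - x)"
    using eventually_at_right_less[of x]
    by (rule eventually_mono) (auto intro: monoD[OF mono_rgt[OF G]] mono_rgt_bounds(2)[OF G])
  then have "(rgt G \<longlongrightarrow> rgt G x) (at_right x)"
    by (intro tendsto_sandwich[OF _ _ tendsto_const upper]) (auto elim: eventually_mono)
  then show ?thesis by (simp add: continuous_within)
qed

lemma tendsto_at_left_rgt:
  fixes G :: "real \<Rightarrow> real"
  assumes G: "mono G" and lim: "(G \<longlongrightarrow> l) (at_left s)"
  shows "(rgt G \<longlongrightarrow> l) (at_left s)"
proof -
  have "filterlim (\<lambda>y. (y + s) / 2) (at_left s) (at_left s)"
  proof (rule tendsto_imp_filterlim_at_left)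
    show "((\<lambda>y. (y + s) / 2) \<longlongrightarrow> s) (at_left s)"
      by (auto intro!: tendsto_eq_intros)
    show "\<forall>\<^sub>F y in at_left s. (y + s) / 2 < s"
      using eventually_at_left_real[of "s - 1" s] by (rule eventually_mono) auto
  qed
  then have upper: "((\<lambda>y. G ((y + s) / 2)) \<longlongrightarrow> l) (at_left s)"
    by (rule filterlim_compose[OF lim])
  have "\<forall>\<^sub>F y in at_left s. G y \<le> rgt G y \<and> rgt G y \<le> G ((y + s) / 2)"
    using eventually_at_left_real[of "s - 1" s]
    by (rule eventually_mono) (auto intro: mono_rgt_bounds[OF G])
  then show ?thesis
    by (intro tendsto_sandwich[OF _ _ lim upper]) (auto elim: eventually_mono)
qed

lemma finite_measure_interval_measure:
  fixes F :: "real \<Rightarrow> real"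
  assumes mono: "mono F" and rc: "\<And>a. continuous (at_right a) F"
    and bnd: "\<And>x. lo \<le> F x \<and> F x \<le> hi"
  shows "finite_measure (interval_measure F)"
proof (rule finite_measureI)
  let ?A = "\<lambda>n::nat. {- real n <.. real n}"
  have "emeasure (interval_measure F) (\<Union>n. ?A n) = (SUP n. emeasure (interval_measure F) (?A n))"
    by (rule SUP_emeasure_incseq[symmetric]) (auto simp: incseq_def)
  also have "\<dots> \<le> ennreal (hi - lo)"
  proof (rule SUP_least)
    fix n
    have "emeasure (interval_measure F) (?A n) = ennreal (F (real n) - F (- real n))"
      by (rule emeasure_interval_measure_Ioc) (auto intro: monoD[OF mono] rc)
    also have "\<dots> \<le> ennreal (hi - lo)"
      using bnd[of "real n"] bnd[of "- real n"] by (intro ennreal_leI) linarith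
    finally show "emeasure (interval_measure F) (?A n) \<le> ennreal (hi - lo)" .
  qed
  finally have "emeasure (interval_measure F) (\<Union>n. ?A n) \<le> ennreal (hi - lo)" .
  moreover have "(\<Union>n. ?A n) = UNIV"
  proof safe
    fix x :: real
    obtain n :: nat where "\<bar>x\<bar> < real n" using reals_Archimedean2 by blast
    then show "x \<in> (\<Union>n. ?A n)" by (intro UN_I[of n]) auto
  qed auto
  ultimately have "emeasure (interval_measure F) (space (interval_measure F)) \<le> ennreal (hi - lo)"
    by simp
  then show "emeasure (interval_measure F) (space (interval_measure F)) \<noteq> \<infinity>"
    using ennreal_neq_top neq_top_trans by (metis infinity_ennreal_def)
qed

lemma measure_interval_measure_singleton:
  fixes F :: "real \<Rightarrow> real"
  assumes mono: "mono F" and rc: "\<And>a. continuous (at_right a) F"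
    and fm: "finite_measure (interval_measure F)"
    and lim: "(F \<longlongrightarrow> l) (at_left s)"
  shows "measure (interval_measure F) {s} = F s - l"
proof -
  let ?x = "\<lambda>n::nat. s - 1 / real (Suc n)"
  have x: "?x \<longlonglongrightarrow> s"
    using tendsto_diff[OF tendsto_const LIMSEQ_Suc[OF lim_inverse_n'], of s] by simp
  have dec: "antimono (\<lambda>n. {?x n <.. s})"
  proof (rule antimonoI)
    fix m n :: nat assume "m \<le> n"
    then have "?x m \<le> ?x n" by (simp add: frac_le)
    then show "{?x n <.. s} \<subseteq> {?x m <.. s}" by auto
  qed
  have "(\<Inter>n. {?x n <.. s}) = {s}"
  proof safe
    fix y assume "y \<in> (\<Inter>n. {?x n <.. s})"
    then have "?x n \<le> y" "y \<le> s" for n by (auto intro: less_imp_le)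
    then show "y = s" using LIMSEQ_le_const2[OF x] by (meson order.antisym)
  qed auto
  moreover have "(\<lambda>n. measure (interval_measure F) {?x n <.. s})
      \<longlonglongrightarrow> measure (interval_measure F) (\<Inter>n. {?x n <.. s})"
    by (rule finite_measure.finite_Lim_measure_decseq[OF fm _ dec]) auto
  moreover have "measure (interval_measure F) {?x n <.. s} = F s - F (?x n)" for n
    by (rule measure_interval_measure_Ioc) (auto intro: monoD[OF mono] rc)
  ultimately have "(\<lambda>n. F s - F (?x n)) \<longlonglongrightarrow> measure (interval_measure F) {s}"
    by simp
  moreover have "(\<lambda>n. F s - F (?x n)) \<longlonglongrightarrow> F s - l"
    by (intro tendsto_intros filterlim_compose[OF lim] tendsto_imp_filterlim_at_left[OF x]) auto
  ultimately show ?thesis by (rule LIMSEQ_unique)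
qed

lemma mono_qext:
  assumes "mono_on {0..T} q" "0 \<le> T"
  shows "mono (qext T q)"
  unfolding qext_def by (rule monoI, rule mono_onD[OF assms(1)]) (use assms(2) in auto)

lemma qext_bounds:
  assumes "mono_on {0..T} q" "0 \<le> T"
  shows "q 0 \<le> qext T q x \<and> qext T q x \<le> q T"
  unfolding qext_def using assms by (auto intro!: mono_onD[OF assms(1)])

lemma eventually_qext_at_right:
  assumes "x \<in> {0..<T}"
  shows "\<forall>\<^sub>F y in at_right x. qext T q y = q y"
proof -
  have "x < T" using assms by simp
  then show ?thesis
    unfolding eventually_at_right[OF \<open>x < T\<close>] using assms by (intro exI[of _ T]) (auto simp: qext_def)
qed

lemma eventually_qext_at_left:
  assumes "s \<in> {0<..T}"
  shows "\<forall>\<^sub>F y in at_left s. qext T q y = q y"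
proof -
  have "0 < s" using assms by simp
  then show ?thesis
    unfolding eventually_at_left[OF \<open>0 < s\<close>] using assms by (intro exI[of _ 0]) (auto simp: qext_def)
qed

lemma finite_measure_LS:
  assumes "mono_on {0..T} q" "0 \<le> T"
  shows "finite_measure (LS T q)"
proof -
  have G: "mono (qext T q)" by (rule mono_qext[OF assms])
  have "q 0 \<le> rgt (qext T q) x \<and> rgt (qext T q) x \<le> q T" for x
    using mono_rgt_bounds[OF G, of x "x + 1"] qext_bounds[OF assms, of x]
      qext_bounds[OF assms, of "x + 1"] by linarith
  then show ?thesis
    unfolding LS_def
    by (rule finite_measure_interval_measure[OF mono_rgt[OF G] continuous_at_right_rgt[OF G]])
qed

lemma measure_LS_singleton:
  assumes "mono_on {0..T} q" "0 \<le> T" and lim: "(qext T q \<longlongrightarrow> l) (at_left s)"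
  shows "measure (LS T q) {s} = rgt (qext T q) s - l"
proof -
  have G: "mono (qext T q)" by (rule mono_qext[OF assms(1,2)])
  show ?thesis
    using measure_interval_measure_singleton[OF mono_rgt[OF G] continuous_at_right_rgt[OF G]
        finite_measure_LS[OF assms(1,2), unfolded LS_def] tendsto_at_left_rgt[OF G lim]]
    by (simp add: LS_def)
qed

lemma measure_LS_singleton_cadlag:
  assumes "0 \<le> T" and qv: "qv_cadlag T Z q" and s: "s \<in> {0<..T}"
  shows "measure (LS T q) {s} = (Z s - lft Z s)\<^sup>2"
proof -
  have mono: "mono_on {0..T} q" using qv by (simp add: qv_cadlag_def)
  have "(qext T q \<longlongrightarrow> q s - (Z s - lft Z s)\<^sup>2) (at_left s)"
    using tendsto_cong[OF eventually_qext_at_left[OF s]] qv s by (simp add: qv_cadlag_def)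
  moreover have "rgt (qext T q) s = q s"
  proof (rule rgt_eq)
    show "(qext T q \<longlongrightarrow> q s) (at_right s)"
    proof (cases "s = T")
      case True
      have "\<forall>\<^sub>F y in at_right s. qext T q y = q T"
        using eventually_at_right_less[of s]
        by (rule eventually_mono) (use True assms in \<open>auto simp: qext_def\<close>)
      with True show ?thesis by (simp add: tendsto_eventually)
    next
      case False
      then have "s \<in> {0..<T}" using s by simp
      then show ?thesis
        using tendsto_cong[OF eventually_qext_at_right] qv by (simp add: qv_cadlag_def continuous_within)
    qed
  qed
  ultimately show ?thesis using measure_LS_singleton[OF mono \<open>0 \<le> T\<close>] by simp
qed

lemma measure_LS_singleton_caglad:
  assumes "0 \<le> T" and qv: "qv_caglad T Z q" and s: "s \<in> {0..<T}"
  shows "measure (LS T q) {s} = (rgt Z s - Z s)\<^sup>2"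
proof -
  have mono: "mono_on {0..T} q" using qv by (simp add: qv_caglad_def)
  have "(qext T q \<longlongrightarrow> q s) (at_left s)"
  proof (cases "s = 0")
    case True
    have "\<forall>\<^sub>F y in at_left s. qext T q y = q 0"
      using eventually_at_left_real[of "s - 1" s]
      by (rule eventually_mono) (use True assms in \<open>auto simp: qext_def\<close>)
    with True show ?thesis by (simp add: tendsto_eventually)
  next
    case False
    then have "s \<in> {0<..T}" using s by simp
    then show ?thesis
      using tendsto_cong[OF eventually_qext_at_left] qv by (simp add: qv_caglad_def continuous_within)
  qed
  moreover have "rgt (qext T q) s = q s + (rgt Z s - Z s)\<^sup>2"
    using rgt_eq tendsto_cong[OF eventually_qext_at_right[OF s]] qv s by (simp add: qv_caglad_def)
  ultimately show ?thesis using measure_LS_singleton[OF mono \<open>0 \<le> T\<close>] by simp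
qed

section \<open>Integration against a finite measure with atoms\<close>

lemma borel_measurable_countable_support:
  fixes f :: "real \<Rightarrow> real"
  assumes "countable {x. f x \<noteq> 0}"
  shows "f \<in> borel_measurable borel"
proof (rule borel_measurable_continuous_countable_exceptions[OF assms])
  have "continuous_on (- {x. f x \<noteq> 0}) (\<lambda>x. 0::real)" by (rule continuous_on_const)
  then show "continuous_on (- {x. f x \<noteq> 0}) f"
    by (rule continuous_on_cong[THEN iffD1, rotated 2]) auto
qed

lemma set_integrable_bounded:
  fixes \<mu> :: "real measure" and g :: "real \<Rightarrow> real"
  assumes fm: "finite_measure \<mu>" and S: "S \<in> sets \<mu>" and meas: "set_borel_measurable \<mu> S g"
    and bnd: "\<And>s. s \<in> S \<Longrightarrow> \<bar>g s\<bar> \<le> K"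
  shows "set_integrable \<mu> S g"
  unfolding set_integrable_def
proof (rule integrableI_bounded_set[OF S, where B=K])
  show "(\<lambda>x. indicator S x *\<^sub>R g x) \<in> borel_measurable \<mu>"
    using meas by (simp add: set_borel_measurable_def)
  show "emeasure \<mu> S < \<infinity>"
    using finite_measure.emeasure_finite[OF fm] by (simp add: less_top[symmetric])
  show "AE x in \<mu>. x \<in> S \<longrightarrow> norm (indicator S x *\<^sub>R g x) \<le> K"
    using bnd by (intro AE_I2) auto
qed auto

lemma summable_on_measure_singletons:
  fixes \<mu> :: "real measure"
  assumes fm: "finite_measure \<mu>" and sets: "sets \<mu> = sets borel"
  shows "(\<lambda>s. measure \<mu> {s}) summable_on A"
proof (rule nonneg_bdd_above_summable_on)
  show "bdd_above (sum (\<lambda>s. measure \<mu> {s}) ` {F. F \<subseteq> A \<and> finite F})"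
  proof (rule bdd_aboveI)
    fix x assume "x \<in> sum (\<lambda>s. measure \<mu> {s}) ` {F. F \<subseteq> A \<and> finite F}"
    then obtain F where F: "finite F" "x = sum (\<lambda>s. measure \<mu> {s}) F" by auto
    then have "x = measure \<mu> F"
      using finite_measure.finite_measure_eq_sum_singleton[OF fm F(1)] sets by simp
    then show "x \<le> measure \<mu> (space \<mu>)" using finite_measure.bounded_measure[OF fm] by simp
  qed
qed auto

lemma summable_on_dominated_by_singletons:
  fixes \<mu> :: "real measure" and f :: "real \<Rightarrow> real"
  assumes fm: "finite_measure \<mu>" and sets: "sets \<mu> = sets borel"
    and bnd: "\<And>s. s \<in> A \<Longrightarrow> \<bar>f s\<bar> \<le> K * measure \<mu> {s}"
  shows "f summable_on A"
proof -
  have "(\<lambda>s. K * measure \<mu> {s}) summable_on A"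
    by (rule summable_on_cmult_right[OF summable_on_measure_singletons[OF fm sets]])
  then have "Infinite_Sum.abs_summable_on (\<lambda>s. K * measure \<mu> {s}) A"
    by (rule summable_on_iff_abs_summable_on_real[THEN iffD1])
  moreover have "norm (f s) \<le> norm (K * measure \<mu> {s})" if "s \<in> A" for s
    unfolding real_norm_def using bnd[OF that] abs_ge_self[of "K * measure \<mu> {s}"] by linarith
  ultimately have "Infinite_Sum.abs_summable_on f A"
    by (rule Infinite_Sum.abs_summable_on_comparison_test)
  then show ?thesis by (rule summable_on_iff_abs_summable_on_real[THEN iffD2])
qed

lemma nn_integral_countable_set:
  fixes \<mu> :: "real measure"
  assumes fm: "finite_measure \<mu>" and sets: "sets \<mu> = sets borel" and J: "countable J"
    and nonneg: "\<And>s. s \<in> J \<Longrightarrow> 0 \<le> g s"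
  shows "(\<integral>\<^sup>+ x. ennreal (indicator J x * g x) \<partial>\<mu>)
    = (\<integral>\<^sup>+ s. ennreal (g s * measure \<mu> {s}) \<partial>count_space J)"
proof -
  have "ennreal (indicator J x * g x) = (\<integral>\<^sup>+ s. ennreal (g s) * indicator {s} x \<partial>count_space J)"
    for x
  proof -
    have "(\<integral>\<^sup>+ s. ennreal (g s) * indicator {s} x \<partial>count_space J)
        = (\<integral>\<^sup>+ s. ennreal (indicator J x * g x) * indicator {x} s \<partial>count_space J)"
      by (rule nn_integral_cong) (auto split: split_indicator)
    then show ?thesis by (simp add: nn_integral_cmult_indicator split: split_indicator)
  qed
  then have "(\<integral>\<^sup>+ x. ennreal (indicator J x * g x) \<partial>\<mu>)
      = (\<integral>\<^sup>+ x. (\<integral>\<^sup>+ s. ennreal (g s) * indicator {s} x \<partial>count_space J) \<partial>\<mu>)"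
    by simp
  also have "\<dots> = (\<integral>\<^sup>+ s. (\<integral>\<^sup>+ x. ennreal (g s) * indicator {s} x \<partial>\<mu>) \<partial>count_space J)"
    by (rule nn_integral_count_space_nn_integral[OF J]) (use sets in measurable)
  also have "\<dots> = (\<integral>\<^sup>+ s. ennreal (g s * measure \<mu> {s}) \<partial>count_space J)"
    by (rule nn_integral_cong)
       (use sets nonneg finite_measure.emeasure_eq_measure[OF fm] in
        \<open>simp add: nn_integral_cmult_indicator ennreal_mult\<close>)
  finally show ?thesis .
qed

lemma set_integral_countable_nonneg:
  fixes \<mu> :: "real measure" and g :: "real \<Rightarrow> real"
  assumes fm: "finite_measure \<mu>" and sets: "sets \<mu> = sets borel" and J: "countable J"
    and nonneg: "\<And>s. s \<in> J \<Longrightarrow> 0 \<le> g s" and bnd: "\<And>s. s \<in> J \<Longrightarrow> g s \<le> K"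
  shows "set_integrable \<mu> J g" "set_lebesgue_integral \<mu> J g = infsum (\<lambda>s. g s * measure \<mu> {s}) J"
proof -
  have meas: "(\<lambda>x. indicator J x * g x) \<in> borel_measurable \<mu>"
    unfolding measurable_cong_sets[OF sets refl]
    by (rule borel_measurable_countable_support, rule countable_subset[OF _ J])
       (auto split: split_indicator)
  show int: "set_integrable \<mu> J g"
    by (rule set_integrable_bounded[OF fm _ _, where K=K])
       (use meas sets J nonneg bnd in \<open>auto simp: set_borel_measurable_def sets.countable\<close>)
  let ?N = "\<integral>\<^sup>+ s. ennreal (g s * measure \<mu> {s}) \<partial>count_space J"
  have "set_lebesgue_integral \<mu> J g = enn2real (\<integral>\<^sup>+ x. ennreal (indicator J x * g x) \<partial>\<mu>)"
    unfolding set_lebesgue_integral_def using meas nonneg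
    by (simp add: integral_eq_nn_integral split: split_indicator)
  also have "\<dots> = enn2real ?N"
    by (simp add: nn_integral_countable_set[OF fm sets J nonneg])
  finally have eq: "set_lebesgue_integral \<mu> J g = enn2real ?N" .
  have "(\<integral>\<^sup>+ x. ennreal (indicator J x * g x) \<partial>\<mu>) < \<infinity>"
    using int nonneg unfolding set_integrable_def
    by (auto simp: integrable_iff_bounded abs_mult split: split_indicator
             elim!: order.strict_trans1[rotated] intro!: nn_integral_mono)
  then have fin: "?N \<noteq> \<infinity>"
    by (simp add: nn_integral_countable_set[OF fm sets J nonneg])
  have wnonneg: "\<And>s. s \<in> J \<Longrightarrow> 0 \<le> g s * measure \<mu> {s}" using nonneg by simp
  have "Infinite_Set_Sum.abs_summable_on (\<lambda>s. g s * measure \<mu> {s}) J"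
    unfolding abs_summable_on_def
    by (rule integrableI_nonneg) (use fin wnonneg in \<open>auto simp: AE_count_space less_top\<close>)
  then have "infsum (\<lambda>s. g s * measure \<mu> {s}) J = infsetsum (\<lambda>s. g s * measure \<mu> {s}) J"
    by (rule infsetsum_infsum[symmetric])
  also have "\<dots> = enn2real ?N"
    by (rule infsetsum_conv_nn_integral[OF fin wnonneg])
  finally show "set_lebesgue_integral \<mu> J g = infsum (\<lambda>s. g s * measure \<mu> {s}) J"
    using eq by simp
qed

lemma set_integral_countable:
  fixes \<mu> :: "real measure" and g :: "real \<Rightarrow> real"
  assumes fm: "finite_measure \<mu>" and sets: "sets \<mu> = sets borel" and J: "countable J"
    and bnd: "\<And>s. s \<in> J \<Longrightarrow> \<bar>g s\<bar> \<le> K"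
  shows "set_integrable \<mu> J g" "set_lebesgue_integral \<mu> J g = infsum (\<lambda>s. g s * measure \<mu> {s}) J"
proof -
  have shifted: "set_integrable \<mu> J (\<lambda>s. g s + K)"
      "set_lebesgue_integral \<mu> J (\<lambda>s. g s + K) = infsum (\<lambda>s. (g s + K) * measure \<mu> {s}) J"
    by (rule set_integral_countable_nonneg[OF fm sets J, where K="2 * K"];
        use bnd in \<open>force simp: abs_le_iff\<close>)+
  have const: "set_integrable \<mu> J (\<lambda>s. K)"
      "set_lebesgue_integral \<mu> J (\<lambda>s. K) = infsum (\<lambda>s. K * measure \<mu> {s}) J"
    by (rule set_integral_countable_nonneg[OF fm sets J, where K=K];
        use bnd in \<open>force simp: abs_le_iff\<close>)+
  have sums: "(\<lambda>s. (g s + K) * measure \<mu> {s}) summable_on J"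
      "(\<lambda>s. K * measure \<mu> {s}) summable_on J"
    by (rule summable_on_dominated_by_singletons[OF fm sets, where K="2 * K"];
        use bnd in \<open>force simp: abs_mult abs_le_iff intro: mult_right_mono\<close>)+
  have g: "g = (\<lambda>s. (g s + K) - K)" by simp
  show "set_integrable \<mu> J g"
    by (subst g, rule set_integral_diff(1)[OF shifted(1) const(1)])
  have "set_lebesgue_integral \<mu> J g
      = set_lebesgue_integral \<mu> J (\<lambda>s. g s + K) - set_lebesgue_integral \<mu> J (\<lambda>s. K)"
    by (subst g, rule set_integral_diff(2)[OF shifted(1) const(1)])
  also have "\<dots> = infsum (\<lambda>s. (g s + K) * measure \<mu> {s} + - (K * measure \<mu> {s})) J"
    unfolding shifted(2) const(2) infsum_add[OF sums(1) summable_on_uminus[THEN iffD2, OF sums(2)]]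
    by (simp add: infsum_uminus)
  finally show "set_lebesgue_integral \<mu> J g = infsum (\<lambda>s. g s * measure \<mu> {s}) J"
    by (simp add: algebra_simps)
qed

lemma countable_jumps:
  fixes \<mu> :: "real measure"
  assumes fm: "finite_measure \<mu>" and atoms: "\<And>s. s \<in> S \<Longrightarrow> measure \<mu> {s} = (D s)\<^sup>2"
  shows "countable {s \<in> S. D s \<noteq> 0}"
  by (rule countable_subset[OF _ finite_measure.countable_support[OF fm]]) (auto simp: atoms)

lemma has_sum_jump_weighted:
  fixes \<mu> :: "real measure" and f :: "real \<Rightarrow> real"
  assumes fm: "finite_measure \<mu>" and sets: "sets \<mu> = sets borel"
    and atoms: "\<And>s. s \<in> S \<Longrightarrow> measure \<mu> {s} = (D s)\<^sup>2" and bnd: "\<And>s. s \<in> S \<Longrightarrow> \<bar>f s\<bar> \<le> K"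
  shows "((\<lambda>s. f s * (D s)\<^sup>2) has_sum infsum (\<lambda>s. f s * (D s)\<^sup>2) S) S"
proof (rule has_sum_infsum, rule summable_on_dominated_by_singletons[OF fm sets, where K=K])
  show "\<bar>f s * (D s)\<^sup>2\<bar> \<le> K * measure \<mu> {s}" if "s \<in> S" for s
    using bnd[OF that] by (auto simp: atoms[OF that] abs_mult intro: mult_right_mono)
qed

lemma abs_jump_le:
  fixes \<mu> :: "real measure"
  assumes fm: "finite_measure \<mu>" and atom: "measure \<mu> {s} = (D s)\<^sup>2"
  shows "\<bar>D s\<bar> \<le> sqrt (measure \<mu> (space \<mu>))"
  using finite_measure.bounded_measure[OF fm, of "{s}"] by (simp add: atom real_le_rsqrt)

lemma set_integral_eq_jump_sum:
  fixes \<mu> :: "real measure" and g :: "real \<Rightarrow> real"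
  assumes fm: "finite_measure \<mu>" and sets: "sets \<mu> = sets borel"
    and atoms: "\<And>s. s \<in> S \<Longrightarrow> measure \<mu> {s} = (D s)\<^sup>2"
    and bnd: "\<And>s. s \<in> S \<Longrightarrow> \<bar>g s\<bar> \<le> K" and vanish: "\<And>s. s \<in> S \<Longrightarrow> D s = 0 \<Longrightarrow> g s = 0"
  shows "set_lebesgue_integral \<mu> S g = infsum (\<lambda>s. g s * (D s)\<^sup>2) S"
proof -
  let ?J = "{s \<in> S. D s \<noteq> 0}"
  have "set_lebesgue_integral \<mu> S g = set_lebesgue_integral \<mu> ?J g"
    unfolding set_lebesgue_integral_def
    by (rule Bochner_Integration.integral_cong) (auto simp: vanish split: split_indicator)
  also have "\<dots> = infsum (\<lambda>s. g s * measure \<mu> {s}) ?J"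
    by (rule set_integral_countable(2)[OF fm sets countable_jumps[OF fm atoms], where K=K])
       (use bnd in auto)
  also have "\<dots> = infsum (\<lambda>s. g s * (D s)\<^sup>2) S"
    by (rule infsum_cong_neutral) (auto simp: atoms)
  finally show ?thesis .
qed

lemma set_integral_plus_jump_sum_split:
  fixes \<mu> :: "real measure" and g c :: "real \<Rightarrow> real"
  assumes fm: "finite_measure \<mu>" and sets: "sets \<mu> = sets borel" and S: "S \<in> sets borel"
    and atoms: "\<And>s. s \<in> S \<Longrightarrow> measure \<mu> {s} = (D s)\<^sup>2"
    and meas: "set_borel_measurable borel S g"
    and g: "\<And>s. s \<in> S \<Longrightarrow> \<bar>g s\<bar> \<le> K" and c: "\<And>s. s \<in> S \<Longrightarrow> \<bar>c s\<bar> \<le> L"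
  shows "(\<lambda>s. (g s + c s) * (D s)\<^sup>2) summable_on {s \<in> S. D s \<noteq> 0}"
    and "set_lebesgue_integral \<mu> S g + infsum (\<lambda>s. c s * (D s)\<^sup>2) S
       = set_lebesgue_integral \<mu> {s \<in> S. D s = 0} g
         + infsum (\<lambda>s. (g s + c s) * (D s)\<^sup>2) {s \<in> S. D s \<noteq> 0}"
proof -
  let ?J = "{s \<in> S. D s \<noteq> 0}"
  have J: "countable ?J" by (rule countable_jumps[OF fm atoms])
  have J_sets: "?J \<in> sets \<mu>" using J sets by (simp add: sets.countable)
  have int: "set_integrable \<mu> S g"
    by (rule set_integrable_bounded[OF fm _ _ g])
       (use S sets meas in \<open>auto simp: set_borel_measurable_def\<close>)
  have dominated: "(\<lambda>s. f s * (D s)\<^sup>2) summable_on ?J" if "\<And>s. s \<in> S \<Longrightarrow> \<bar>f s\<bar> \<le> M" for f M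
    using has_sum_jump_weighted[OF fm sets, of ?J D f M] atoms that by (auto intro: has_sum_imp_summable)
  show "(\<lambda>s. (g s + c s) * (D s)\<^sup>2) summable_on ?J"
    using summable_on_add[OF dominated[OF g] dominated[OF c]] by (simp add: distrib_right)
  have "set_lebesgue_integral \<mu> S g
      = set_lebesgue_integral \<mu> {s \<in> S. D s = 0} g + set_lebesgue_integral \<mu> ?J g"
  proof -
    have "S = {s \<in> S. D s = 0} \<union> ?J" by auto
    moreover have "{s \<in> S. D s = 0} = S - ?J" by auto
    ultimately show ?thesis
      using set_integral_Un[of "{s \<in> S. D s = 0}" ?J \<mu> g] J_sets S sets
      by (auto intro!: set_integrable_subset[OF int])
  qed
  moreover have "set_lebesgue_integral \<mu> ?J g = infsum (\<lambda>s. g s * (D s)\<^sup>2) ?J"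
    using set_integral_countable(2)[OF fm sets J, of g K] g atoms
    by (auto intro: infsum_cong)
  moreover have "infsum (\<lambda>s. c s * (D s)\<^sup>2) S = infsum (\<lambda>s. c s * (D s)\<^sup>2) ?J"
    by (rule infsum_cong_neutral) auto
  moreover have "infsum (\<lambda>s. g s * (D s)\<^sup>2) ?J + infsum (\<lambda>s. c s * (D s)\<^sup>2) ?J
      = infsum (\<lambda>s. (g s + c s) * (D s)\<^sup>2) ?J"
    using infsum_add[OF dominated[OF g] dominated[OF c]] by (simp add: distrib_right)
  ultimately show "set_lebesgue_integral \<mu> S g + infsum (\<lambda>s. c s * (D s)\<^sup>2) S
       = set_lebesgue_integral \<mu> {s \<in> S. D s = 0} g + infsum (\<lambda>s. (g s + c s) * (D s)\<^sup>2) ?J"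
    by simp
qed

lemma set_integral_mono_set:
  fixes g :: "'a \<Rightarrow> real"
  assumes int: "set_integrable \<mu> B g" and A: "A \<in> sets \<mu>" and "A \<subseteq> B"
    and nonneg: "\<And>s. s \<in> B \<Longrightarrow> 0 \<le> g s"
  shows "set_lebesgue_integral \<mu> A g \<le> set_lebesgue_integral \<mu> B g"
  unfolding set_lebesgue_integral_def
proof (rule Bochner_Integration.integral_mono)
  show "integrable \<mu> (\<lambda>x. indicator A x *\<^sub>R g x)"
    using set_integrable_subset[OF int A \<open>A \<subseteq> B\<close>] by (simp add: set_integrable_def)
  show "integrable \<mu> (\<lambda>x. indicator B x *\<^sub>R g x)"
    using int by (simp add: set_integrable_def)
  show "indicator A x *\<^sub>R g x \<le> indicator B x *\<^sub>R g x" for x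
    using \<open>A \<subseteq> B\<close> nonneg by (auto split: split_indicator)
qed

lemma nonneg_increasing_set_integral_plus_infsum:
  fixes \<mu> :: "'a measure" and g \<phi> :: "'a \<Rightarrow> real" and N J :: "real \<Rightarrow> 'a set"
  assumes "0 \<le> T"
    and N_sets: "\<And>t. t \<in> {0..T} \<Longrightarrow> N t \<in> sets \<mu>"
    and mono: "\<And>t1 t2. t1 \<in> {0..T} \<Longrightarrow> t2 \<in> {0..T} \<Longrightarrow> t1 \<le> t2 \<Longrightarrow> N t1 \<subseteq> N t2 \<and> J t1 \<subseteq> J t2"
    and int: "set_integrable \<mu> (N T) g" and g: "\<And>s. s \<in> N T \<Longrightarrow> 0 \<le> g s"
    and summable: "\<phi> summable_on J T" and \<phi>: "\<And>s. s \<in> J T \<Longrightarrow> 0 \<le> \<phi> s"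
    and C: "\<And>t. t \<in> {0..T} \<Longrightarrow> C t = set_lebesgue_integral \<mu> (N t) g + infsum \<phi> (J t)"
  shows "nonneg_increasing T C"
proof -
  have T: "T \<in> {0..T}" using \<open>0 \<le> T\<close> by simp
  have sub: "N t \<subseteq> N T" "J t \<subseteq> J T" if "t \<in> {0..T}" for t using mono[OF that T] that by auto
  have le: "C t1 \<le> C t2" if t1: "t1 \<in> {0..T}" and t2: "t2 \<in> {0..T}" and "t1 \<le> t2" for t1 t2
  proof -
    have "set_lebesgue_integral \<mu> (N t1) g \<le> set_lebesgue_integral \<mu> (N t2) g"
      by (rule set_integral_mono_set[OF set_integrable_subset[OF int N_sets[OF t2]] N_sets[OF t1]])
         (use mono[OF t1 t2 \<open>t1 \<le> t2\<close>] sub[OF t2] g in auto)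
    moreover have "infsum \<phi> (J t1) \<le> infsum \<phi> (J t2)"
      by (rule infsum_mono_neutral[OF summable_on_subset_banach[OF summable sub(2)[OF t1]]
            summable_on_subset_banach[OF summable sub(2)[OF t2]]])
         (use mono[OF t1 t2 \<open>t1 \<le> t2\<close>] sub(2)[OF t2] \<phi> in auto)
    ultimately show ?thesis using C[OF t1] C[OF t2] by simp
  qed
  have "0 \<le> C t" if t: "t \<in> {0..T}" for t
  proof -
    have "set_lebesgue_integral \<mu> {} g \<le> set_lebesgue_integral \<mu> (N t) g"
      by (rule set_integral_mono_set[OF set_integrable_subset[OF int N_sets[OF t]]])
         (use g sub[OF t] in auto)
    moreover have "0 \<le> infsum \<phi> (J t)"
      by (rule infsum_nonneg) (use \<phi> sub[OF t] in auto)
    ultimately show ?thesis using C[OF t] by (simp add: set_lebesgue_integral_def)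
  qed
  with le show ?thesis
    unfolding nonneg_increasing_def by (auto intro: mono_onI)
qed

lemma nonneg_increasing_integral_plus_jumps:
  fixes \<mu> :: "real measure" and I :: "real \<Rightarrow> real set" and g \<phi> D C :: "real \<Rightarrow> real"
  assumes fm: "finite_measure \<mu>" and sets: "sets \<mu> = sets borel" and "0 \<le> T"
    and I_sets: "\<And>t. t \<in> {0..T} \<Longrightarrow> I t \<in> sets borel"
    and I_mono: "\<And>t1 t2. t1 \<in> {0..T} \<Longrightarrow> t2 \<in> {0..T} \<Longrightarrow> t1 \<le> t2 \<Longrightarrow> I t1 \<subseteq> I t2"
    and atoms: "\<And>s. s \<in> I T \<Longrightarrow> measure \<mu> {s} = (D s)\<^sup>2"
    and meas: "set_borel_measurable borel (I T) g"
    and g: "\<And>s. s \<in> I T \<Longrightarrow> 0 \<le> g s \<and> g s \<le> K" and \<phi>: "\<And>s. s \<in> I T \<Longrightarrow> \<bar>\<phi> s\<bar> \<le> L"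
    and jump: "\<And>s. s \<in> I T \<Longrightarrow> D s \<noteq> 0 \<Longrightarrow> 0 \<le> \<phi> s"
    and C: "\<And>t. t \<in> {0..T} \<Longrightarrow>
      C t = set_lebesgue_integral \<mu> (I t) g + infsum (\<lambda>s. (\<phi> s - g s) * (D s)\<^sup>2) (I t)"
  shows "nonneg_increasing T C"
proof -
  have T: "T \<in> {0..T}" using \<open>0 \<le> T\<close> by simp
  have sub: "I t \<subseteq> I T" if "t \<in> {0..T}" for t using I_mono[OF that T] that by simp
  have g_abs: "\<bar>g s\<bar> \<le> K" if "s \<in> I T" for s using g[OF that] by simp
  have c_abs: "\<bar>\<phi> s - g s\<bar> \<le> L + K" if "s \<in> I T" for s using g[OF that] \<phi>[OF that] by linarith
  note split = set_integral_plus_jump_sum_split[OF fm sets I_sets, of _ D g K "\<lambda>s. \<phi> s - g s" "L + K"]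
  have N_sets: "{s \<in> I t. D s = 0} \<in> sets \<mu>" if "t \<in> {0..T}" for t
  proof -
    have "{s \<in> I t. D s = 0} = I t - {s \<in> I T. D s \<noteq> 0}" using sub[OF that] by auto
    then show ?thesis
      using I_sets[OF that] countable_jumps[OF fm atoms] sets by (auto simp: sets.countable)
  qed
  have int: "set_integrable \<mu> (I T) g"
    by (rule set_integrable_bounded[OF fm _ _ g_abs])
       (use I_sets[OF T] sets meas in \<open>auto simp: set_borel_measurable_def\<close>)
  show ?thesis
  proof (rule nonneg_increasing_set_integral_plus_infsum[OF \<open>0 \<le> T\<close> N_sets,
        where J="\<lambda>t. {s \<in> I t. D s \<noteq> 0}" and \<phi>="\<lambda>s. \<phi> s * (D s)\<^sup>2"])
    show "set_integrable \<mu> {s \<in> I T. D s = 0} g"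
      by (rule set_integrable_subset[OF int N_sets[OF T]]) auto
    show "C t = set_lebesgue_integral \<mu> {s \<in> I t. D s = 0} g
      + infsum (\<lambda>s. \<phi> s * (D s)\<^sup>2) {s \<in> I t. D s \<noteq> 0}"
      if t: "t \<in> {0..T}" for t
      using split(2)[OF t] set_borel_measurable_subset[OF meas I_sets[OF t] sub[OF t]]
        atoms g_abs c_abs sub[OF t] C[OF t] by auto
    show "(\<lambda>s. \<phi> s * (D s)\<^sup>2) summable_on {s \<in> I T. D s \<noteq> 0}"
      using split(1)[OF T] meas atoms g_abs c_abs by auto
  qed (use I_mono g jump in auto)
qed

section \<open>The market model\<close>

lemma C2_fun_has_real_derivative: "C2_fun f \<Longrightarrow> (f has_real_derivative deriv f y) (at y)"
  unfolding C2_fun_def by (simp add: DERIV_deriv_iff_real_differentiable)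

lemma C2_fun_isCont_deriv: "C2_fun f \<Longrightarrow> isCont (deriv f) y"
  unfolding C2_fun_def by (simp add: differentiable_imp_continuous_within)

lemma Mp_eq_deriv:
  assumes "C2_fun (A t)" "C2_fun (B t)"
  shows "Mp A B t y = (deriv (A t) y + deriv (B t) y) / 2"
  unfolding Mp_def
  by (intro DERIV_imp_deriv DERIV_cdivide DERIV_add C2_fun_has_real_derivative assms)

lemma Pp_eq_deriv:
  assumes "C2_fun (A t)" "C2_fun (B t)"
  shows "Pp A B t y = deriv (A t) y - deriv (B t) y"
  unfolding Pp_def
  by (intro DERIV_imp_deriv DERIV_diff C2_fun_has_real_derivative assms)

lemma Mp_Pp_bounded:
  assumes "price_ok T A" "price_ok T B"
  shows "\<exists>K. \<forall>t\<in>{0..T}. \<forall>y. \<bar>y\<bar> \<le> R \<longrightarrow> \<bar>Mp A B t y\<bar> \<le> K \<and> \<bar>Pp A B t y\<bar> \<le> K"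
proof -
  obtain KA KB where
    KA: "\<forall>t\<in>{0..T}. \<forall>y. \<bar>y\<bar> \<le> R \<longrightarrow> \<bar>deriv (A t) y\<bar> \<le> KA" and
    KB: "\<forall>t\<in>{0..T}. \<forall>y. \<bar>y\<bar> \<le> R \<longrightarrow> \<bar>deriv (B t) y\<bar> \<le> KB"
    using assms unfolding price_ok_def by meson
  have "\<bar>Mp A B t y\<bar> \<le> KA + KB \<and> \<bar>Pp A B t y\<bar> \<le> KA + KB" if "t \<in> {0..T}" "\<bar>y\<bar> \<le> R" for t y
  proof -
    have "C2_fun (A t)" "C2_fun (B t)" using assms that unfolding price_ok_def by auto
    moreover have "\<bar>deriv (A t) y\<bar> \<le> KA" "\<bar>deriv (B t) y\<bar> \<le> KB" using KA KB that by auto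
    ultimately show ?thesis by (simp add: Mp_eq_deriv Pp_eq_deriv abs_le_iff)
  qed
  then show ?thesis by blast
qed

lemma Mp_Pp_bounded_on_jumps:
  fixes \<mu> :: "real measure"
  assumes "price_ok T A" "price_ok T B" and fm: "finite_measure \<mu>"
    and atoms: "\<And>s. s \<in> S \<Longrightarrow> measure \<mu> {s} = (D s)\<^sup>2" and "S \<subseteq> {0..T}"
  obtains K where "\<And>t. t \<in> {0..T} \<Longrightarrow> \<bar>Mp A B t 0\<bar> \<le> K \<and> \<bar>Pp A B t 0\<bar> \<le> K"
    and "\<And>s. s \<in> S \<Longrightarrow> \<bar>Mp A B s (D s)\<bar> \<le> K \<and> \<bar>Pp A B s (D s)\<bar> \<le> K"
proof -
  obtain K where K: "\<forall>t\<in>{0..T}. \<forall>y. \<bar>y\<bar> \<le> sqrt (measure \<mu> (space \<mu>)) \<longrightarrow>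
      \<bar>Mp A B t y\<bar> \<le> K \<and> \<bar>Pp A B t y\<bar> \<le> K"
    using Mp_Pp_bounded[OF assms(1,2)] by blast
  show ?thesis
    by (rule that[of K]) (use K abs_jump_le[where D=D, OF fm atoms] \<open>S \<subseteq> {0..T}\<close> in auto)
qed

lemma cadlag_on_Mp_Pp_zero:
  assumes "price_ok T A" "price_ok T B"
  shows "cadlag_on T (\<lambda>t. Mp A B t 0)" "cadlag_on T (\<lambda>t. Pp A B t 0)"
proof -
  have C2: "C2_fun (A t)" "C2_fun (B t)" if "t \<in> {0..T}" for t
    using assms that unfolding price_ok_def by auto
  have cA: "cadlag_on T (\<lambda>t. deriv (A t) 0)" and cB: "cadlag_on T (\<lambda>t. deriv (B t) 0)"
    using assms unfolding price_ok_def by auto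
  show "cadlag_on T (\<lambda>t. Mp A B t 0)"
    by (rule cadlag_on_lincomb[OF cA cB, of _ "1/2" "1/2"])
       (simp add: Mp_eq_deriv[where A=A and B=B, OF C2])
  show "cadlag_on T (\<lambda>t. Pp A B t 0)"
    by (rule cadlag_on_lincomb[OF cA cB, of _ 1 "-1"])
       (simp add: Pp_eq_deriv[where A=A and B=B, OF C2])
qed

lemma standing_assumption_at_zero:
  assumes C2: "C2_fun (A t)" "C2_fun (B t)"
    and st: "\<forall>y. Mp A B t y > - (1/2) * sgn y * Pp A B t y"
  shows "0 \<le> Mp A B t 0 + 1/2 * sgn d * Pp A B t 0"
proof -
  let ?h = "\<lambda>y. Mp A B t y + 1/2 * sgn d * Pp A B t y"
  have "isCont ?h 0"
    by (simp add: Mp_eq_deriv[where A=A and B=B, OF C2] Pp_eq_deriv[where A=A and B=B, OF C2]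
        C2_fun_isCont_deriv[OF C2(1)] C2_fun_isCont_deriv[OF C2(2)])
  then have lim: "(?h \<longlongrightarrow> ?h 0) (at_right 0)" "(?h \<longlongrightarrow> ?h 0) (at_left 0)"
    by (simp_all add: isCont_def filterlim_at_split)
  have pos: "0 \<le> ?h y" if "sgn y = sgn d" for y
    using st[rule_format, of y] that by simp
  consider "0 < d" | "d < 0" | "d = 0" by linarith
  then show ?thesis
  proof cases
    case 1
    have "\<forall>\<^sub>F y in at_right 0. 0 \<le> ?h y"
      using eventually_at_right_less[of "0::real"] by (rule eventually_mono) (intro pos, simp add: 1)
    then show ?thesis by (intro tendsto_lowerbound[OF lim(1)]) auto
  next
    case 2
    have "\<forall>\<^sub>F y in at_left 0. 0 \<le> ?h y"
    proof (rule eventually_mono[OF eventually_at_left_real[of "-1" "0::real"]])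
      show "0 \<le> ?h y" if "y \<in> {-1<..<0}" for y using that 2 by (intro pos) simp
    qed simp
    then show ?thesis by (intro tendsto_lowerbound[OF lim(2)]) auto
  next
    case 3
    then show ?thesis using pos[of 0] by simp
  qed
qed

text \<open>The cost of a trade of size d at time t is d^2 times this coefficient.\<close>

definition jump_cost_coeff :: "(real \<Rightarrow> real \<Rightarrow> real) \<Rightarrow> (real \<Rightarrow> real \<Rightarrow> real) \<Rightarrow> real \<Rightarrow> real \<Rightarrow> real" where
  "jump_cost_coeff A B t d = 1/2 * (Mp A B t 0 + Mp A B t d) + 1/4 * sgn d * (Pp A B t 0 + Pp A B t d)"

lemma jump_cost_coeff_nonneg:
  assumes C2: "C2_fun (A t)" "C2_fun (B t)"
    and st: "\<forall>y. Mp A B t y > - (1/2) * sgn y * Pp A B t y"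
  shows "0 \<le> jump_cost_coeff A B t d"
  using standing_assumption_at_zero[OF C2 st, of d] st[rule_format, of d]
  by (simp add: jump_cost_coeff_def algebra_simps)

lemma abs_jump_cost_coeff_le:
  assumes "\<bar>Mp A B t 0\<bar> \<le> K" "\<bar>Mp A B t d\<bar> \<le> K" "\<bar>Pp A B t 0\<bar> \<le> K" "\<bar>Pp A B t d\<bar> \<le> K"
  shows "\<bar>jump_cost_coeff A B t d\<bar> \<le> 2 * K"
  using assms by (cases d "0::real" rule: linorder_cases)
    (auto simp: jump_cost_coeff_def sgn_if abs_le_iff field_simps)

lemma abs_mult_self_eq_sgn: "\<bar>x\<bar> * x = sgn x * (x::real)\<^sup>2"
  by (cases "x < 0"; cases "x = 0") (auto simp: power2_eq_square sgn_if)

lemma cost_cadlag_eq: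
  fixes A B :: "real \<Rightarrow> real \<Rightarrow> real" and Z q :: "real \<Rightarrow> real" and T t K :: real
  defines "D \<equiv> \<lambda>s. Z s - lft Z s" and "m \<equiv> \<lambda>r. Mp A B r 0" and "p \<equiv> \<lambda>r. Pp A B r 0"
  assumes fm: "finite_measure (LS T q)" and sets: "sets (LS T q) = sets borel"
    and atoms: "\<And>s. s \<in> {0<..t} \<Longrightarrow> measure (LS T q) {s} = (D s)\<^sup>2"
    and bnd: "\<And>s. s \<in> {0<..t} \<Longrightarrow> \<bar>m s\<bar> \<le> K \<and> \<bar>p s\<bar> \<le> K \<and> \<bar>lft m s\<bar> \<le> K \<and> \<bar>lft p s\<bar> \<le> K
      \<and> \<bar>Mp A B s (D s)\<bar> \<le> K \<and> \<bar>Pp A B s (D s)\<bar> \<le> K"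
  shows "cost_cadlag T A B Z q t = set_lebesgue_integral (LS T q) {0<..t} (lft m)
    + infsum (\<lambda>s. (jump_cost_coeff A B s (D s) - lft m s) * (D s)\<^sup>2) {0<..t}"
proof -
  let ?S = "{0<..t}" and ?\<Sigma> = "\<lambda>f. infsum (\<lambda>s. f s * (D s)\<^sup>2) {0<..t}"
  \<comment> \<open>\<open>k\<^sub>i s * (D s)\<^sup>2\<close> is the contribution at \<open>s\<close> of the \<open>i\<close>-th term of the cost
    (for \<open>i = 4\<close> up to the factor 1/2).\<close>
  define k2 where "k2 s = m s - lft m s" for s
  define k3 where "k3 s = 1/2 * (Mp A B s (D s) - m s)" for s
  define k4 where "k4 s = lft p s * sgn (D s)" for s
  define k5 where "k5 s = 1/2 * sgn (D s) * (p s - lft p s)" for s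
  define k6 where "k6 s = 1/4 * sgn (D s) * (Pp A B s (D s) - p s)" for s
  have k_bnd: "\<bar>k2 s\<bar> \<le> 2 * K \<and> \<bar>k3 s\<bar> \<le> 2 * K \<and> \<bar>k4 s\<bar> \<le> 2 * K \<and> \<bar>k5 s\<bar> \<le> 2 * K \<and> \<bar>k6 s\<bar> \<le> 2 * K"
    if "s \<in> ?S" for s
    using bnd[OF that] by (cases "D s" "0::real" rule: linorder_cases)
      (auto simp: k2_def k3_def k4_def k5_def k6_def abs_le_iff field_simps)
  note hs = has_sum_jump_weighted[OF fm sets, of ?S D, OF atoms]
  have "((\<lambda>s. k2 s * (D s)\<^sup>2 + k3 s * (D s)\<^sup>2 + 1/2 * (k4 s * (D s)\<^sup>2) + k5 s * (D s)\<^sup>2 + k6 s * (D s)\<^sup>2)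
      has_sum (?\<Sigma> k2 + ?\<Sigma> k3 + 1/2 * ?\<Sigma> k4 + ?\<Sigma> k5 + ?\<Sigma> k6)) ?S"
    by (intro has_sum_add has_sum_cmult_right hs) (use k_bnd in blast)+
  then have sum: "?\<Sigma> (\<lambda>s. jump_cost_coeff A B s (D s) - lft m s)
      = ?\<Sigma> k2 + ?\<Sigma> k3 + 1/2 * ?\<Sigma> k4 + ?\<Sigma> k5 + ?\<Sigma> k6"
    by (intro infsumI) (simp add: jump_cost_coeff_def k2_def k3_def k4_def k5_def k6_def m_def p_def
        algebra_simps)
  have int: "set_lebesgue_integral (LS T q) ?S (\<lambda>s. lft p s * sgn (D s)) = ?\<Sigma> k4"
    unfolding k4_def
    by (rule set_integral_eq_jump_sum[OF fm sets atoms, where K="2 * K"])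
       (use k_bnd in \<open>auto simp: k4_def\<close>)
  have "(\<lambda>s. (D s)\<^sup>2 * (m s - lft m s)) = (\<lambda>s. k2 s * (D s)\<^sup>2)"
    "(\<lambda>s. 1/2 * (Mp A B s (D s) - m s) * (D s)\<^sup>2) = (\<lambda>s. k3 s * (D s)\<^sup>2)"
    "(\<lambda>s. 1/2 * \<bar>D s\<bar> * D s * (p s - lft p s)) = (\<lambda>s. k5 s * (D s)\<^sup>2)"
    "(\<lambda>s. 1/4 * \<bar>D s\<bar> * D s * (Pp A B s (D s) - p s)) = (\<lambda>s. k6 s * (D s)\<^sup>2)"
    by (auto simp: k2_def k3_def k5_def k6_def abs_mult_self_eq_sgn[symmetric])
  with sum int show ?thesis
    unfolding cost_cadlag_def D_def m_def p_def by simp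
qed

lemma nonneg_increasing_cost_cadlag:
  assumes T: "0 \<le> T" and pA: "price_ok T A" and pB: "price_ok T B"
    and st: "\<forall>t\<in>{0..T}. \<forall>y. Mp A B t y > - (1/2) * sgn y * Pp A B t y"
    and qv: "qv_cadlag T Z q"
  shows "nonneg_increasing T (cost_cadlag T A B Z q)"
proof -
  define D where "D s = Z s - lft Z s" for s
  define m where "m t = Mp A B t 0" for t
  define p where "p t = Pp A B t 0" for t
  have mono_q: "mono_on {0..T} q" using qv by (simp add: qv_cadlag_def)
  have fm: "finite_measure (LS T q)" by (rule finite_measure_LS[OF mono_q T])
  have sets: "sets (LS T q) = sets borel" by (simp add: LS_def)
  have atoms: "measure (LS T q) {s} = (D s)\<^sup>2" if "s \<in> {0<..T}" for s
    unfolding D_def by (rule measure_LS_singleton_cadlag[OF T qv that])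
  obtain K where K: "\<And>t. t \<in> {0..T} \<Longrightarrow> \<bar>m t\<bar> \<le> K \<and> \<bar>p t\<bar> \<le> K"
      "\<And>s. s \<in> {0<..T} \<Longrightarrow> \<bar>Mp A B s (D s)\<bar> \<le> K \<and> \<bar>Pp A B s (D s)\<bar> \<le> K"
    by (rule Mp_Pp_bounded_on_jumps[OF pA pB fm atoms, of "{0<..T}"]) (auto simp: m_def p_def)
  have left_limits: "\<exists>l. (m \<longlongrightarrow> l) (at_left s)" "\<exists>l. (p \<longlongrightarrow> l) (at_left s)" if "s \<in> {0<..T}" for s
    using cadlag_on_Mp_Pp_zero[OF pA pB] that unfolding cadlag_on_def m_def[abs_def] p_def[abs_def] by auto
  have m_pos: "0 < m t" if "t \<in> {0..T}" for t
    using st[rule_format, OF that, of 0] unfolding m_def by simp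
  have lft_bnd: "0 \<le> lft m s \<and> lft m s \<le> K" "-K \<le> lft p s \<and> lft p s \<le> K" if "s \<in> {0<..T}" for s
    by (rule lft_between[OF that left_limits(1)[OF that]], use K m_pos in \<open>force simp: abs_le_iff\<close>)
       (rule lft_between[OF that left_limits(2)[OF that]], use K in \<open>force simp: abs_le_iff\<close>)
  show ?thesis
  proof (rule nonneg_increasing_integral_plus_jumps[OF fm sets T, where I="\<lambda>t. {0<..t}" and D=D
        and \<phi>="\<lambda>s. jump_cost_coeff A B s (D s)" and K=K and L="2 * K"])
    show "set_borel_measurable borel {0<..T} (lft m)"
      by (rule set_borel_measurable_lft) (use left_limits in auto)
    show "\<bar>jump_cost_coeff A B s (D s)\<bar> \<le> 2 * K" if "s \<in> {0<..T}" for s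
      by (rule abs_jump_cost_coeff_le) (use K that in \<open>auto simp: m_def p_def\<close>)
    show "0 \<le> jump_cost_coeff A B s (D s)" if "s \<in> {0<..T}" for s
      using that st pA pB by (intro jump_cost_coeff_nonneg) (auto simp: price_ok_def)
    have bnd: "\<bar>m s\<bar> \<le> K \<and> \<bar>p s\<bar> \<le> K \<and> \<bar>lft m s\<bar> \<le> K \<and> \<bar>lft p s\<bar> \<le> K
      \<and> \<bar>Mp A B s (D s)\<bar> \<le> K \<and> \<bar>Pp A B s (D s)\<bar> \<le> K" if "s \<in> {0<..T}" for s
      using K(1)[of s] K(2)[OF that] lft_bnd[OF that] that by (auto simp: abs_le_iff)
    show "cost_cadlag T A B Z q t = set_lebesgue_integral (LS T q) {0<..t} (lft m)
      + infsum (\<lambda>s. (jump_cost_coeff A B s (D s) - lft m s) * (D s)\<^sup>2) {0<..t}" if "t \<in> {0..T}" for t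
      using cost_cadlag_eq[OF fm sets, of t Z A B K] atoms bnd that
      unfolding D_def[abs_def] m_def[abs_def] p_def[abs_def] by auto
  qed (use atoms lft_bnd in auto)
qed

lemma cost_caglad_eq:
  fixes A B :: "real \<Rightarrow> real \<Rightarrow> real" and Z q :: "real \<Rightarrow> real" and T t K :: real
  defines "D \<equiv> \<lambda>s. rgt Z s - Z s" and "m \<equiv> \<lambda>r. Mp A B r 0" and "p \<equiv> \<lambda>r. Pp A B r 0"
  assumes fm: "finite_measure (LS T q)" and sets: "sets (LS T q) = sets borel"
    and atoms: "\<And>s. s \<in> {0..<t} \<Longrightarrow> measure (LS T q) {s} = (D s)\<^sup>2"
    and bnd: "\<And>s. s \<in> {0..<t} \<Longrightarrow> \<bar>m s\<bar> \<le> K \<and> \<bar>p s\<bar> \<le> K \<and> \<bar>Mp A B s (D s)\<bar> \<le> K \<and> \<bar>Pp A B s (D s)\<bar> \<le> K"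
  shows "cost_caglad T A B Z q t = set_lebesgue_integral (LS T q) {0..<t} m
    + infsum (\<lambda>s. (jump_cost_coeff A B s (D s) - m s) * (D s)\<^sup>2) {0..<t}"
proof -
  let ?S = "{0..<t}" and ?\<Sigma> = "\<lambda>f. infsum (\<lambda>s. f s * (D s)\<^sup>2) {0..<t}"
  \<comment> \<open>Numbered as the corresponding summands of the cadlag cost.\<close>
  define k3 where "k3 s = 1/2 * (Mp A B s (D s) - m s)" for s
  define k4 where "k4 s = p s * sgn (D s)" for s
  define k6 where "k6 s = 1/4 * sgn (D s) * (Pp A B s (D s) - p s)" for s
  have k_bnd: "\<bar>k3 s\<bar> \<le> 2 * K \<and> \<bar>k4 s\<bar> \<le> 2 * K \<and> \<bar>k6 s\<bar> \<le> 2 * K" if "s \<in> ?S" for s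
    using bnd[OF that] by (cases "D s" "0::real" rule: linorder_cases)
      (auto simp: k3_def k4_def k6_def abs_le_iff field_simps)
  note hs = has_sum_jump_weighted[OF fm sets, of ?S D, OF atoms]
  have "((\<lambda>s. k3 s * (D s)\<^sup>2 + 1/2 * (k4 s * (D s)\<^sup>2) + k6 s * (D s)\<^sup>2)
      has_sum (?\<Sigma> k3 + 1/2 * ?\<Sigma> k4 + ?\<Sigma> k6)) ?S"
    by (intro has_sum_add has_sum_cmult_right hs) (use k_bnd in blast)+
  then have sum: "?\<Sigma> (\<lambda>s. jump_cost_coeff A B s (D s) - m s) = ?\<Sigma> k3 + 1/2 * ?\<Sigma> k4 + ?\<Sigma> k6"
    by (intro infsumI)
       (simp add: jump_cost_coeff_def k3_def k4_def k6_def m_def p_def algebra_simps)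
  have int: "set_lebesgue_integral (LS T q) ?S (\<lambda>s. p s * sgn (D s)) = ?\<Sigma> k4"
    unfolding k4_def
    by (rule set_integral_eq_jump_sum[OF fm sets atoms, where K="2 * K"])
       (use k_bnd in \<open>auto simp: k4_def\<close>)
  have "(\<lambda>s. 1/2 * (Mp A B s (D s) - m s) * (D s)\<^sup>2) = (\<lambda>s. k3 s * (D s)\<^sup>2)"
    "(\<lambda>s. 1/4 * \<bar>D s\<bar> * D s * (Pp A B s (D s) - p s)) = (\<lambda>s. k6 s * (D s)\<^sup>2)"
    by (auto simp: k3_def k6_def abs_mult_self_eq_sgn[symmetric])
  with sum int show ?thesis
    unfolding cost_caglad_def D_def m_def p_def by simp
qed

lemma nonneg_increasing_cost_caglad:
  assumes T: "0 \<le> T" and pA: "price_ok T A" and pB: "price_ok T B"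
    and st: "\<forall>t\<in>{0..T}. \<forall>y. Mp A B t y > - (1/2) * sgn y * Pp A B t y"
    and qv: "qv_caglad T Z q"
  shows "nonneg_increasing T (cost_caglad T A B Z q)"
proof -
  define D where "D s = rgt Z s - Z s" for s
  define m where "m t = Mp A B t 0" for t
  define p where "p t = Pp A B t 0" for t
  have mono_q: "mono_on {0..T} q" using qv by (simp add: qv_caglad_def)
  have fm: "finite_measure (LS T q)" by (rule finite_measure_LS[OF mono_q T])
  have sets: "sets (LS T q) = sets borel" by (simp add: LS_def)
  have atoms: "measure (LS T q) {s} = (D s)\<^sup>2" if "s \<in> {0..<T}" for s
    unfolding D_def by (rule measure_LS_singleton_caglad[OF T qv that])
  obtain K where K: "\<And>t. t \<in> {0..T} \<Longrightarrow> \<bar>m t\<bar> \<le> K \<and> \<bar>p t\<bar> \<le> K"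
      "\<And>s. s \<in> {0..<T} \<Longrightarrow> \<bar>Mp A B s (D s)\<bar> \<le> K \<and> \<bar>Pp A B s (D s)\<bar> \<le> K"
    by (rule Mp_Pp_bounded_on_jumps[OF pA pB fm atoms, of "{0..<T}"]) (auto simp: m_def p_def)
  have m_pos: "0 < m t" if "t \<in> {0..T}" for t
    using st[rule_format, OF that, of 0] unfolding m_def by simp
  show ?thesis
  proof (rule nonneg_increasing_integral_plus_jumps[OF fm sets T, where I="\<lambda>t. {0..<t}" and D=D
        and \<phi>="\<lambda>s. jump_cost_coeff A B s (D s)" and K=K and L="2 * K"])
    show "set_borel_measurable borel {0..<T} m"
      by (rule set_borel_measurable_continuous_at_right)
         (use cadlag_on_Mp_Pp_zero(1)[OF pA pB] in \<open>auto simp: cadlag_on_def m_def[abs_def]\<close>)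
    show "0 \<le> m s \<and> m s \<le> K" if "s \<in> {0..<T}" for s
      using K(1)[of s] m_pos[of s] that by auto
    show "\<bar>jump_cost_coeff A B s (D s)\<bar> \<le> 2 * K" if "s \<in> {0..<T}" for s
      by (rule abs_jump_cost_coeff_le) (use K that in \<open>auto simp: m_def p_def\<close>)
    show "0 \<le> jump_cost_coeff A B s (D s)" if "s \<in> {0..<T}" for s
      using that st pA pB by (intro jump_cost_coeff_nonneg) (auto simp: price_ok_def)
    show "cost_caglad T A B Z q t = set_lebesgue_integral (LS T q) {0..<t} m
      + infsum (\<lambda>s. (jump_cost_coeff A B s (D s) - m s) * (D s)\<^sup>2) {0..<t}" if "t \<in> {0..T}" for t
      using cost_caglad_eq[OF fm sets, of t Z A B K] atoms K that
      unfolding D_def[abs_def] m_def[abs_def] p_def[abs_def] by auto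
  qed (use atoms in auto)
qed

theorem lemma1:
  fixes T :: real and A B :: "real \<Rightarrow> real \<Rightarrow> real" and Z q :: "real \<Rightarrow> real"
  assumes "T > 0"
    and "price_ok T A" and "price_ok T B"
    and "\<forall>t\<in>{0..T}. \<forall>y. Mp A B t y > - (1/2) * sgn y * Pp A B t y"
  shows "(cadlag_on T Z \<and> qv_cadlag T Z q \<longrightarrow> nonneg_increasing T (cost_cadlag T A B Z q))
       \<and> (caglad_on T Z \<and> qv_caglad T Z q \<longrightarrow> nonneg_increasing T (cost_caglad T A B Z q))"
  using nonneg_increasing_cost_cadlag[OF _ assms(2-4)] nonneg_increasing_cost_caglad[OF _ assms(2-4)]
    assms(1) by auto

end
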